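(* Let $\{(G_n,\Psi_n,\varphi^L_n,\varphi^U_n)\}_{n\ge0}$ be an $\mathcal{F}$-system (with $\varphi^U_n>0$) satisfying Condition $\Gamma$, with induced Cantor system $(X,H_X)$, and assume its associated fence $\mathbf{F}_\Phi$ is a Scissorhand fence. Then there exists a unique continuous surjection $T:\mathbf{F}_\Phi\to\mathbf{F}_\Phi$ having $H_X$ as a factor (i.e. $\pi\circ T=H_X\circ\pi$, where $\pi(x,t)=x$) and satisfying $T(x,\varphi^U(x))=(H_X(x),\varphi^U(H_X(x)))$ for all $x\in X$. Moreover: (1) if $H_X$ is a homeomorphism, then $T$ is a homeomorphism of $\mathbf{F}_\Phi$; (2) if $s$ and $H_X$ are both Lipschitz, then so is $T$; (3) if $s$ and $1/s$ are both Lipschitz and $H_X$ is bi-Lipschitz, then $T$ is bi-Lipschitz; (4) if $s\equiv1$ and $H_X$ is an isometry, then $T$ is an isometry.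
   Context: An $\mathcal{F}$-system consists of: finite directed graphs $G_n$ ($n\ge0$), each vertex having at least one outgoing and one incoming edge; surjective maps $\Psi_n:G_{n+1}\to G_n$ sending edges to edges; such that (i) for each $n$ and $v\in G_n$ there are $m>n$ and distinct $v',v''\in G_{m+1}$ with $\Psi_n\circ\cdots\circ\Psi_m(v')=\Psi_n\circ\cdots\circ\Psi_m(v'')=v$; (ii) for every $m$ there is $n>m$ such that for every $g\in G_n$ the set $\{\Psi_m\circ\cdots\circ\Psi_{n-1}(g'):\overrightarrow{gg'}\in G_n\}$ has exactly one element; and maps $\varphi^L_n,\varphi^U_n:G_n\to[0,1]$ with $\varphi^L_n\le\varphi^U_n$, $\varphi^U_{n+1}(v')\le\varphi^U_n(\Psi_n(v'))$, $\varphi^L_{n+1}(v')\ge\varphi^L_n(\Psi_n(v'))$, and such that for every $g\in G_n$ there is $g'\in G_{n+1}$ with $\Psi_n(g')=g$, $\varphi^L_{n+1}(g')=\varphi^L_n(g)$, $\varphi^U_{n+1}(g')=\varphi^U_n(g)$. $X=\{x\in\prod_n G_n: x(n)=\Psi_n(x(n+1))\ \forall n\}$ with metric $d(x,y)=2^{-n}$, $n$ the least index with $x(n)\ne y(n)$; $H_X:X\to X$ is the continuous surjection whose graph is $\{(x,y)\in X^2:\overrightarrow{x(n)y(n)}\in G_n\ \forall n\}$. $\varphi^U(x)=\lim_n\varphi^U_n(x(n))$, $\varphi^L(x)=\lim_n\varphi^L_n(x(n))$, $\Phi=(\varphi^L,\varphi^U)$ and $\mathbf{F}_\Phi=\{(x,t)\in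 X\times[0,1]:\varphi^L(x)\le t\le\varphi^U(x)\}$, with the maximum metric of $X\times[0,1]$. It is a Scissorhand fence if the graph of $\varphi^U$ is dense in $\mathbf{F}_\Phi$ and $\{x:\varphi^L(x)\ne\varphi^U(x)\}$ is dense in $X$. For $u,v\in G_n$, $s_n(u,v)=\varphi^U_n(v)/\varphi^U_n(u)$; for an edge $\overrightarrow{uv}\in G_n$, $\Gamma_n(\overrightarrow{uv})=\max\{|s_n(v,u)-s_{n+1}(v',u')|,|s_n(u,v)-s_{n+1}(u',v')| : \overrightarrow{u'v'}\in G_{n+1},\Psi_n(u')=u,\Psi_n(v')=v\}$, $\Gamma_n=\max\Gamma_n(\overrightarrow{uv})$; Condition $\Gamma$: $\sum_n\Gamma_n<1$. Finally $s:X\to\mathbb{R}$, $s(x)=\lim_n s_n(x(n),H_X(x)(n))$. *)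

theory Defs
  imports "HOL-Analysis.Analysis"
begin

text \<open>An F-system is given by: vertex sets V n of the graphs G_n, edge relations E n
  (E n u v means there is an edge from u to v in G_n), bonding maps Psi n : G_(n+1) -> G_n,
  and the maps phiL n, phiU n : G_n -> [0,1].\<close>

text \<open>proj Psi n k = Psi_n o Psi_(n+1) o ... o Psi_(n+k-1), a map G_(n+k) -> G_n.\<close>
fun proj :: "(nat \<Rightarrow> 'v \<Rightarrow> 'v) \<Rightarrow> nat \<Rightarrow> nat \<Rightarrow> 'v \<Rightarrow> 'v" where
  "proj Psi n 0 v = v"
| "proj Psi n (Suc k) v = proj Psi n k (Psi (n + k) v)"

definition F_system ::
  "(nat \<Rightarrow> 'v set) \<Rightarrow> (nat \<Rightarrow> 'v \<Rightarrow> 'v \<Rightarrow> bool) \<Rightarrow> (nat \<Rightarrow> 'v \<Rightarrow> 'v)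
   \<Rightarrow> (nat \<Rightarrow> 'v \<Rightarrow> real) \<Rightarrow> (nat \<Rightarrow> 'v \<Rightarrow> real) \<Rightarrow> bool" where
  "F_system V E Psi phiL phiU \<longleftrightarrow>
     \<comment> \<open>finite directed graphs, every vertex has an outgoing and an incoming edge\<close>
     (\<forall>n. finite (V n)) \<and>
     (\<forall>n u v. E n u v \<longrightarrow> u \<in> V n \<and> v \<in> V n) \<and>
     (\<forall>n. \<forall>v\<in>V n. (\<exists>w. E n v w) \<and> (\<exists>w. E n w v)) \<and>
     \<comment> \<open>Psi n is a surjective graph homomorphism G_(n+1) -> G_n (on vertices and edges)\<close>
     (\<forall>n. Psi n ` V (Suc n) = V n) \<and>
     (\<forall>n u v. E (Suc n) u v \<longrightarrow> E n (Psi n u) (Psi n v)) \<and>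
     (\<forall>n u v. E n u v \<longrightarrow> (\<exists>u' v'. E (Suc n) u' v' \<and> Psi n u' = u \<and> Psi n v' = v)) \<and>
     \<comment> \<open>condition (i)\<close>
     (\<forall>n. \<forall>v\<in>V n. \<exists>m>n. \<exists>v' v''. v' \<in> V (Suc m) \<and> v'' \<in> V (Suc m) \<and> v' \<noteq> v'' \<and>
         proj Psi n (Suc m - n) v' = v \<and> proj Psi n (Suc m - n) v'' = v) \<and>
     \<comment> \<open>condition (ii)\<close>
     (\<forall>m. \<exists>n>m. \<forall>g\<in>V n. \<exists>w. proj Psi m (n - m) ` {g'. E n g g'} = {w}) \<and>
     \<comment> \<open>conditions on phiL, phiU\<close>
     (\<forall>n. \<forall>v\<in>V n. 0 \<le> phiL n v \<and> phiL n v \<le> phiU n v \<and> phiU n v \<le> 1) \<and>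
     (\<forall>n. \<forall>v'\<in>V (Suc n). phiU (Suc n) v' \<le> phiU n (Psi n v') \<and>
                           phiL (Suc n) v' \<ge> phiL n (Psi n v')) \<and>
     (\<forall>n. \<forall>g\<in>V n. \<exists>g'\<in>V (Suc n). Psi n g' = g \<and> phiL (Suc n) g' = phiL n g \<and>
                                  phiU (Suc n) g' = phiU n g)"

definition Xsp :: "(nat \<Rightarrow> 'v set) \<Rightarrow> (nat \<Rightarrow> 'v \<Rightarrow> 'v) \<Rightarrow> (nat \<Rightarrow> 'v) set" where
  "Xsp V Psi = {x. (\<forall>n. x n \<in> V n) \<and> (\<forall>n. x n = Psi n (x (Suc n)))}"

definition dX :: "(nat \<Rightarrow> 'v) \<Rightarrow> (nat \<Rightarrow> 'v) \<Rightarrow> real" where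
  "dX x y = (if x = y then 0 else (1/2) ^ (LEAST n. x n \<noteq> y n))"

definition HX :: "(nat \<Rightarrow> 'v set) \<Rightarrow> (nat \<Rightarrow> 'v \<Rightarrow> 'v \<Rightarrow> bool) \<Rightarrow> (nat \<Rightarrow> 'v \<Rightarrow> 'v)
    \<Rightarrow> (nat \<Rightarrow> 'v) \<Rightarrow> (nat \<Rightarrow> 'v)" where
  "HX V E Psi x = (THE y. y \<in> Xsp V Psi \<and> (\<forall>n. E n (x n) (y n)))"

definition phi_lim :: "(nat \<Rightarrow> 'v \<Rightarrow> real) \<Rightarrow> (nat \<Rightarrow> 'v) \<Rightarrow> real" where
  "phi_lim phi x = lim (\<lambda>n. phi n (x n))"

definition fence :: "(nat \<Rightarrow> 'v set) \<Rightarrow> (nat \<Rightarrow> 'v \<Rightarrow> 'v) \<Rightarrow> (nat \<Rightarrow> 'v \<Rightarrow> real)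
    \<Rightarrow> (nat \<Rightarrow> 'v \<Rightarrow> real) \<Rightarrow> ((nat \<Rightarrow> 'v) \<times> real) set" where
  "fence V Psi phiL phiU =
     {(x, t). x \<in> Xsp V Psi \<and> phi_lim phiL x \<le> t \<and> t \<le> phi_lim phiU x}"

definition dF :: "(nat \<Rightarrow> 'v) \<times> real \<Rightarrow> (nat \<Rightarrow> 'v) \<times> real \<Rightarrow> real" where
  "dF p q = max (dX (fst p) (fst q)) \<bar>snd p - snd q\<bar>"

definition scissorhand :: "(nat \<Rightarrow> 'v set) \<Rightarrow> (nat \<Rightarrow> 'v \<Rightarrow> 'v) \<Rightarrow> (nat \<Rightarrow> 'v \<Rightarrow> real)
    \<Rightarrow> (nat \<Rightarrow> 'v \<Rightarrow> real) \<Rightarrow> bool" where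
  "scissorhand V Psi phiL phiU \<longleftrightarrow>
     (\<forall>p\<in>fence V Psi phiL phiU. \<forall>e>0. \<exists>x\<in>Xsp V Psi. dF p (x, phi_lim phiU x) < e) \<and>
     (\<forall>x\<in>Xsp V Psi. \<forall>e>0. \<exists>y\<in>Xsp V Psi. phi_lim phiL y \<noteq> phi_lim phiU y \<and> dX x y < e)"

definition sn :: "(nat \<Rightarrow> 'v \<Rightarrow> real) \<Rightarrow> nat \<Rightarrow> 'v \<Rightarrow> 'v \<Rightarrow> real" where
  "sn phiU n u v = phiU n v / phiU n u"

definition Gamma_edge :: "(nat \<Rightarrow> 'v \<Rightarrow> 'v \<Rightarrow> bool) \<Rightarrow> (nat \<Rightarrow> 'v \<Rightarrow> 'v) \<Rightarrow> (nat \<Rightarrow> 'v \<Rightarrow> real)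
    \<Rightarrow> nat \<Rightarrow> 'v \<Rightarrow> 'v \<Rightarrow> real" where
  "Gamma_edge E Psi phiU n u v = Max (insert 0 (\<Union>{{\<bar>sn phiU n v u - sn phiU (Suc n) v' u'\<bar>,
        \<bar>sn phiU n u v - sn phiU (Suc n) u' v'\<bar>} | u' v'.
        E (Suc n) u' v' \<and> Psi n u' = u \<and> Psi n v' = v}))"

definition Gamma :: "(nat \<Rightarrow> 'v \<Rightarrow> 'v \<Rightarrow> bool) \<Rightarrow> (nat \<Rightarrow> 'v \<Rightarrow> 'v) \<Rightarrow> (nat \<Rightarrow> 'v \<Rightarrow> real)
    \<Rightarrow> nat \<Rightarrow> real" where
  "Gamma E Psi phiU n = Max (insert 0 {Gamma_edge E Psi phiU n u v | u v. E n u v})"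

definition condition_Gamma :: "(nat \<Rightarrow> 'v \<Rightarrow> 'v \<Rightarrow> bool) \<Rightarrow> (nat \<Rightarrow> 'v \<Rightarrow> 'v)
    \<Rightarrow> (nat \<Rightarrow> 'v \<Rightarrow> real) \<Rightarrow> bool" where
  "condition_Gamma E Psi phiU \<longleftrightarrow>
     summable (Gamma E Psi phiU) \<and> suminf (Gamma E Psi phiU) < 1"

definition s_fun :: "(nat \<Rightarrow> 'v set) \<Rightarrow> (nat \<Rightarrow> 'v \<Rightarrow> 'v \<Rightarrow> bool) \<Rightarrow> (nat \<Rightarrow> 'v \<Rightarrow> 'v)
    \<Rightarrow> (nat \<Rightarrow> 'v \<Rightarrow> real) \<Rightarrow> (nat \<Rightarrow> 'v) \<Rightarrow> real" where
  "s_fun V E Psi phiU x = lim (\<lambda>n. sn phiU n (x n) (HX V E Psi x n))"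

definition lipschitz_map :: "'a set \<Rightarrow> ('a \<Rightarrow> 'a \<Rightarrow> real) \<Rightarrow> ('b \<Rightarrow> 'b \<Rightarrow> real) \<Rightarrow> ('a \<Rightarrow> 'b) \<Rightarrow> bool" where
  "lipschitz_map M d1 d2 f \<longleftrightarrow> (\<exists>B. \<forall>x\<in>M. \<forall>y\<in>M. d2 (f x) (f y) \<le> B * d1 x y)"

definition bi_lipschitz_map :: "'a set \<Rightarrow> ('a \<Rightarrow> 'a \<Rightarrow> real) \<Rightarrow> ('b \<Rightarrow> 'b \<Rightarrow> real) \<Rightarrow> ('a \<Rightarrow> 'b) \<Rightarrow> bool" where
  "bi_lipschitz_map M d1 d2 f \<longleftrightarrow>
     (\<exists>A>0. \<exists>B. \<forall>x\<in>M. \<forall>y\<in>M. A * d1 x y \<le> d2 (f x) (f y) \<and> d2 (f x) (f y) \<le> B * d1 x y)"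

definition isometric_map :: "'a set \<Rightarrow> ('a \<Rightarrow> 'a \<Rightarrow> real) \<Rightarrow> ('b \<Rightarrow> 'b \<Rightarrow> real) \<Rightarrow> ('a \<Rightarrow> 'b) \<Rightarrow> bool" where
  "isometric_map M d1 d2 f \<longleftrightarrow> (\<forall>x\<in>M. \<forall>y\<in>M. d2 (f x) (f y) = d1 x y)"

definition rdist :: "real \<Rightarrow> real \<Rightarrow> real" where
  "rdist a b = \<bar>a - b\<bar>"

end

theory Submission
  imports Defs
begin

(* T is forced to be (x, t) \<mapsto> (H x, s(x) t).  Condition \<Gamma> bounds the increments of the ratios
   s_n(x(n), H(x)(n)) by the summable sequence \<Gamma>_n, so they converge to s(x) with an error that
   only depends on finitely many coordinates of x; thus s is continuous and pinched between two
   positive constants, and \<phi>^U(H x) = s(x) \<phi>^U(x), i.e. T maps the graph of \<phi>^U onto itself.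
   Since T is uniformly continuous and the graph is dense in the (closed, compact) fence, T maps the
   fence into itself, is determined by its values on the graph, and is onto because H is.  The metric
   properties follow from |s(x) t - s(y) u| \<le> |s(x) - s(y)| + (sup s) |t - u| and from the inverse
   identity t - u = (s(x) t - s(y) u) / s(x) + s(y) u (1/s(x) - 1/s(y)). *)

section \<open>Real estimates\<close>

lemma mult_le_abs_mult:
  fixes B a b :: real
  assumes "0 \<le> a" and "a \<le> b"
  shows "B * a \<le> \<bar>B\<bar> * b"
  using assms by (meson abs_ge_self abs_ge_zero mult_left_mono mult_right_mono order_trans)

lemma summable_increments_tendsto:
  fixes f g :: "nat \<Rightarrow> real"
  assumes g: "summable g" and step: "\<And>n. \<bar>f (Suc n) - f n\<bar> \<le> g n"
  obtains L where "f \<longlonglongrightarrow> L" and "\<And>n. \<bar>L - f n\<bar> \<le> (\<Sum>k. g (k + n))"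
proof -
  define h where "h k = f (Suc k) - f k" for k
  have h_abs: "summable (\<lambda>k. \<bar>h k\<bar>)"
    by (rule summable_comparison_test[OF _ g]) (auto simp: h_def step)
  then have h: "summable h"
    using summable_rabs_cancel by blast
  have f_eq: "f n = f 0 + (\<Sum>k<n. h k)" for n
    using sum_lessThan_telescope[of f n] by (simp add: h_def)
  have "(\<lambda>n. f 0 + (\<Sum>k<n. h k)) \<longlonglongrightarrow> f 0 + suminf h"
    by (intro tendsto_add tendsto_const summable_LIMSEQ h)
  then have "f \<longlonglongrightarrow> f 0 + suminf h"
    by (simp only: f_eq[symmetric])
  moreover have "\<bar>(f 0 + suminf h) - f n\<bar> \<le> (\<Sum>k. g (k + n))" for n
  proof -
    have h_abs_n: "summable (\<lambda>k. \<bar>h (k + n)\<bar>)"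
      using h_abs by (rule summable_ignore_initial_segment)
    have "(f 0 + suminf h) - f n = (\<Sum>k. h (k + n))"
      using suminf_minus_initial_segment[OF h, of n] f_eq[of n] by simp
    also have "\<bar>\<dots>\<bar> \<le> (\<Sum>k. \<bar>h (k + n)\<bar>)"
      by (rule summable_rabs[OF h_abs_n])
    also have "\<dots> \<le> (\<Sum>k. g (k + n))"
      by (rule suminf_le[OF _ h_abs_n summable_ignore_initial_segment[OF g]]) (simp add: h_def step)
    finally show ?thesis .
  qed
  ultimately show thesis by (rule that)
qed

lemma summable_increments_drift:
  fixes f g :: "nat \<Rightarrow> real"
  assumes g: "summable g" and step: "\<And>n. \<bar>f (Suc n) - f n\<bar> \<le> g n"
  shows "\<bar>f n - f 0\<bar> \<le> suminf g"
proof -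
  have "\<bar>f n - f 0\<bar> = \<bar>\<Sum>k<n. f (Suc k) - f k\<bar>"
    by (simp add: sum_lessThan_telescope)
  also have "\<dots> \<le> (\<Sum>k<n. g k)"
    by (rule order_trans[OF sum_abs sum_mono]) (rule step)
  also have "\<dots> \<le> suminf g"
    using step by (intro sum_le_suminf[OF g]) (auto intro: order_trans[OF abs_ge_zero])
  finally show ?thesis .
qed

lemma summable_tail_tendsto_zero:
  fixes g :: "nat \<Rightarrow> real"
  assumes "summable g"
  shows "(\<lambda>n. \<Sum>k. g (k + n)) \<longlonglongrightarrow> 0"
proof -
  have "(\<lambda>n. suminf g - (\<Sum>k<n. g k)) \<longlonglongrightarrow> suminf g - suminf g"
    by (intro tendsto_diff tendsto_const summable_LIMSEQ assms)
  then show ?thesis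
    using suminf_minus_initial_segment[OF assms] by simp
qed

section \<open>The ultrametric on sequences\<close>

lemma dX_le_if_agree:
  assumes "\<And>j. j \<le> k \<Longrightarrow> x j = y j"
  shows "dX x y \<le> (1/2) ^ Suc k"
proof (cases "x = y")
  case False
  then obtain n where "x n \<noteq> y n"
    by auto
  then have "x (LEAST n. x n \<noteq> y n) \<noteq> y (LEAST n. x n \<noteq> y n)"
    by (rule LeastI)
  then have "Suc k \<le> (LEAST n. x n \<noteq> y n)"
    using assms not_less_eq_eq by blast
  then have "((1::real)/2) ^ (LEAST n. x n \<noteq> y n) \<le> (1/2) ^ Suc k"
    by (rule power_decreasing) auto
  then show ?thesis
    using False by (simp only: dX_def if_False)
qed (simp add: dX_def)

lemma eq_if_dX_less:
  assumes "dX x y < (1/2) ^ k" and "j \<le> k"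
  shows "x j = y j"
proof (rule ccontr)
  assume "x j \<noteq> y j"
  then have "x \<noteq> y" and "(LEAST n. x n \<noteq> y n) \<le> k"
    using Least_le[of "\<lambda>n. x n \<noteq> y n" j] assms(2) by auto
  then have "((1::real)/2) ^ k \<le> dX x y"
    by (simp add: dX_def power_decreasing)
  then show False
    using assms(1) by simp
qed

lemma dX_nonneg: "0 \<le> dX x y"
  by (simp add: dX_def)

lemma dX_sym: "dX x y = dX y x"
  by (simp add: dX_def eq_commute)

lemma dX_eq_0_iff: "dX x y = 0 \<longleftrightarrow> x = y"
  by (simp add: dX_def)

lemma dX_ultrametric: "dX x z \<le> max (dX x y) (dX y z)"
proof (cases "x = z")
  case False
  then obtain n where "x n \<noteq> z n"
    by auto
  define m where "m = (LEAST n. x n \<noteq> z n)"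
  have "x m \<noteq> z m"
    unfolding m_def by (rule LeastI) fact
  then have "\<not> dX x y < (1/2) ^ m \<or> \<not> dX y z < (1/2) ^ m"
    using eq_if_dX_less[of x y m m] eq_if_dX_less[of y z m m] by auto
  moreover have "dX x z = (1/2) ^ m"
    using False by (simp add: dX_def m_def)
  ultimately show ?thesis
    by linarith
qed (metis dX_eq_0_iff dX_nonneg max.coboundedI1)

lemma dX_triangle: "dX x z \<le> dX x y + dX y z"
  using dX_ultrametric[of x z y] dX_nonneg[of x y] dX_nonneg[of y z] by linarith

lemma Metric_space_dX: "Metric_space M dX"
  by unfold_locales (auto simp: dX_nonneg dX_sym dX_eq_0_iff dX_triangle)

lemma dF_nonneg: "0 \<le> dF p q"
  by (simp add: dF_def dX_nonneg)

lemma dX_le_dF: "dX x y \<le> dF (x, t) (y, u)"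
  by (simp add: dF_def)

lemma dist_le_dF: "\<bar>t - u\<bar> \<le> dF (x, t) (y, u)"
  by (simp add: dF_def)

lemma Metric_space_dF: "Metric_space M dF"
proof
  show "dF p q = 0 \<longleftrightarrow> p = q" for p q
    using dX_nonneg[of "fst p" "fst q"] dX_eq_0_iff[of "fst p" "fst q"]
    by (auto simp: dF_def prod_eq_iff max_def split: if_splits)
  show "dF p r \<le> dF p q + dF q r" for p q r
  proof (cases p, cases q, cases r)
    fix x t y u z w
    assume pqr: "p = (x, t)" "q = (y, u)" "r = (z, w)"
    have "dX x z \<le> dF p q + dF q r"
      using dX_triangle[of x z y] dX_le_dF[of x y t u] dX_le_dF[of y z u w] unfolding pqr by linarith
    moreover have "\<bar>t - w\<bar> \<le> dF p q + dF q r"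
      using dist_le_dF[of t u x y] dist_le_dF[of u w y z] unfolding pqr by linarith
    ultimately show ?thesis
      unfolding pqr by (simp add: dF_def[of "(x, t)" "(z, w)"])
  qed
qed (simp_all add: dF_nonneg dF_def dX_sym abs_minus_commute)

section \<open>Inverse limits of finite sets\<close>

lemma proj_Suc_outer: "proj Psi n (Suc k) v = Psi n (proj Psi (Suc n) k v)"
  by (induction k arbitrary: v) (auto simp: add.commute add.left_commute)

lemma proj_add: "proj Psi n (a + b) v = proj Psi n a (proj Psi (n + a) b v)"
  by (induction b arbitrary: v) (auto simp: add.assoc)

lemma finite_decreasing_sets_stabilize:
  fixes A :: "nat \<Rightarrow> 'a set"
  assumes dec: "\<And>k. A (Suc k) \<subseteq> A k" and fin: "\<And>k. finite (A k)"
  obtains K where "\<And>k. K \<le> k \<Longrightarrow> A k = A K"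
proof -
  define c where "c = (LEAST c. \<exists>k. card (A k) = c)"
  have "\<exists>k. card (A k) = c"
    unfolding c_def by (rule LeastI_ex) blast
  then obtain K where K: "card (A K) = c" ..
  have "A k = A K" if "K \<le> k" for k
  proof -
    from that have sub: "A k \<subseteq> A K"
    proof (induction k rule: dec_induct)
      case (step k)
      then show ?case
        using dec[of k] by blast
    qed simp
    have "card (A K) \<le> card (A k)"
      unfolding K c_def by (rule Least_le) blast
    with card_mono[OF fin sub] have "card (A k) = card (A K)"
      by (rule antisym)
    then show ?thesis
      by (rule card_subset_eq[OF fin sub])
  qed
  then show thesis
    by (rule that)
qed

lemma inverse_limit_nonempty:
  fixes S :: "nat \<Rightarrow> 'v set"
  assumes fin: "\<And>n. finite (S n)" and ne: "\<And>n. S n \<noteq> {}"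
    and Psi: "\<And>n. Psi n ` S (Suc n) \<subseteq> S n"
  shows "\<exists>x. \<forall>n. x n \<in> S n \<and> x n = Psi n (x (Suc n))"
proof -
  define Q where "Q n k = proj Psi n k ` S (n + k)" for n k
  have Q_dec: "Q n (Suc k) \<subseteq> Q n k" for n k
    using Psi[of "n + k"] by (auto simp: Q_def)
  have "\<exists>K. \<forall>k\<ge>K. Q n k = Q n K" for n
  proof -
    have "finite (Q n k)" for k
      by (simp add: Q_def fin)
    then obtain K where "\<And>k. K \<le> k \<Longrightarrow> Q n k = Q n K"
      using finite_decreasing_sets_stabilize[of "Q n", OF Q_dec] by blast
    then show ?thesis
      by blast
  qed
  then obtain K where K: "\<And>n k. K n \<le> k \<Longrightarrow> Q n k = Q n (K n)"
    by metis
  \<comment> \<open>\<open>R n\<close>: the points of \<open>S n\<close> that lift to arbitrarily high levels\<close>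
  define R where "R n = Q n (K n)" for n
  have R_ne: "R n \<noteq> {}" for n
    using ne by (simp add: R_def Q_def)
  have Q_subset_S: "Q n k \<subseteq> S n" for n k
  proof (induction k)
    case (Suc k)
    then show ?case
      using Q_dec[of n k] by blast
  qed (simp add: Q_def)
  have R_lift: "\<exists>w. w \<in> R (Suc n) \<and> Psi n w = v" if "v \<in> R n" for n v
  proof -
    define k where "k = max (K n) (K (Suc n))"
    have "v \<in> Q n (Suc k)"
      using that K[of n "Suc k"] by (simp add: R_def k_def)
    then obtain u where u: "u \<in> S (n + Suc k)" "v = proj Psi n (Suc k) u"
      by (auto simp: Q_def)
    have "proj Psi (Suc n) k u \<in> R (Suc n)"
      using u(1) K[of "Suc n" k] by (auto simp: R_def Q_def k_def)
    then show ?thesis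
      using u(2) proj_Suc_outer by metis
  qed
  have "\<exists>x. \<forall>n. x n \<in> R n \<and> Psi n (x (Suc n)) = x n"
    by (rule dependent_nat_choice) (use R_ne R_lift in blast)+
  then obtain x where x: "\<forall>n. x n \<in> R n \<and> Psi n (x (Suc n)) = x n"
    by blast
  show ?thesis
  proof (intro exI allI conjI)
    show "x n \<in> S n" for n
      using x Q_subset_S[of n "K n"] unfolding R_def by blast
    show "x n = Psi n (x (Suc n))" for n
      using x by simp
  qed
qed

section \<open>The Cantor system and the fence of an \<open>\<F>\<close>-system\<close>

locale cantor_system =
  fixes V :: "nat \<Rightarrow> 'v set" and E :: "nat \<Rightarrow> 'v \<Rightarrow> 'v \<Rightarrow> bool"
    and Psi :: "nat \<Rightarrow> 'v \<Rightarrow> 'v" and phiL phiU :: "nat \<Rightarrow> 'v \<Rightarrow> real"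
  assumes F_system: "F_system V E Psi phiL phiU"
begin

abbreviation "X \<equiv> Xsp V Psi"
abbreviation "H \<equiv> HX V E Psi"
abbreviation "pL \<equiv> phi_lim phiL"
abbreviation "pU \<equiv> phi_lim phiU"
abbreviation "Fn \<equiv> fence V Psi phiL phiU"

sublocale Cantor: Metric_space X dX
  by (rule Metric_space_dX)

sublocale Fence: Metric_space Fn dF
  by (rule Metric_space_dF)

lemma finite_V: "finite (V n)"
  using F_system unfolding F_system_def by (elim conjE) blast

lemma edge_in_V: "E n u v \<Longrightarrow> u \<in> V n \<and> v \<in> V n"
  using F_system unfolding F_system_def by (elim conjE) blast

lemma out_edge: "v \<in> V n \<Longrightarrow> \<exists>w. E n v w"
  using F_system unfolding F_system_def by (elim conjE) blast

lemma in_edge: "v \<in> V n \<Longrightarrow> \<exists>w. E n w v"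
  using F_system unfolding F_system_def by (elim conjE) blast

lemma Psi_image: "Psi n ` V (Suc n) = V n"
  using F_system unfolding F_system_def by (elim conjE) blast

lemma Psi_edge: "E (Suc n) u v \<Longrightarrow> E n (Psi n u) (Psi n v)"
  using F_system unfolding F_system_def by (elim conjE) blast

lemma out_edges_eventually_determined:
  "\<exists>n>m. \<forall>g\<in>V n. \<exists>w. proj Psi m (n - m) ` {g'. E n g g'} = {w}"
proof -
  have "\<forall>m. \<exists>n>m. \<forall>g\<in>V n. \<exists>w. proj Psi m (n - m) ` {g'. E n g g'} = {w}"
    using F_system unfolding F_system_def by (elim conjE) assumption
  then show ?thesis ..
qed

lemma phi_bounds:
  assumes "v \<in> V n"
  shows "0 \<le> phiL n v \<and> phiL n v \<le> phiU n v \<and> phiU n v \<le> 1"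
proof -
  have "\<forall>n. \<forall>v\<in>V n. 0 \<le> phiL n v \<and> phiL n v \<le> phiU n v \<and> phiU n v \<le> 1"
    using F_system unfolding F_system_def by (elim conjE) assumption
  with assms show ?thesis
    by blast
qed

lemma phi_monotone:
  assumes "v \<in> V (Suc n)"
  shows "phiU (Suc n) v \<le> phiU n (Psi n v) \<and> phiL n (Psi n v) \<le> phiL (Suc n) v"
proof -
  have "\<forall>n. \<forall>v\<in>V (Suc n). phiU (Suc n) v \<le> phiU n (Psi n v) \<and> phiL n (Psi n v) \<le> phiL (Suc n) v"
    using F_system unfolding F_system_def by (elim conjE) assumption
  with assms show ?thesis
    by blast
qed

lemma X_in_V: "x \<in> X \<Longrightarrow> x n \<in> V n"
  unfolding Xsp_def by blast

lemma X_Psi: "x \<in> X \<Longrightarrow> Psi n (x (Suc n)) = x n"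
  unfolding Xsp_def by (metis (mono_tags) mem_Collect_eq)

lemma proj_V: "v \<in> V (n + k) \<Longrightarrow> proj Psi n k v \<in> V n"
proof (induction k arbitrary: v)
  case (Suc k)
  then show ?case
    using Psi_image[of "n + k"] by auto
qed simp

lemma proj_edge: "E (n + k) u v \<Longrightarrow> E n (proj Psi n k u) (proj Psi n k v)"
  by (induction k arbitrary: u v) (auto dest: Psi_edge)

lemma proj_X:
  assumes "x \<in> X" and "j \<le> k"
  shows "proj Psi j (k - j) (x k) = x j"
proof -
  have "proj Psi j i (x (j + i)) = x j" for i
    by (induction i) (auto simp: X_Psi[OF assms(1)])
  from this[of "k - j"] show ?thesis
    using assms(2) by simp
qed

lemma X_agree_below: "x \<in> X \<Longrightarrow> y \<in> X \<Longrightarrow> x k = y k \<Longrightarrow> j \<le> k \<Longrightarrow> x j = y j"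
  using proj_X[of x j k] proj_X[of y j k] by simp

lemma dX_le_if_agree_at: "x \<in> X \<Longrightarrow> y \<in> X \<Longrightarrow> x k = y k \<Longrightarrow> dX x y \<le> (1/2) ^ Suc k"
  by (rule dX_le_if_agree) (rule X_agree_below)

text \<open>The level supplied by condition (ii); it is what makes \<open>H\<^sub>X\<close> well defined and continuous.\<close>

definition det_level :: "nat \<Rightarrow> nat" where
  "det_level m = (SOME n. m < n \<and> (\<forall>g\<in>V n. \<exists>w. proj Psi m (n - m) ` {g'. E n g g'} = {w}))"

lemma det_level:
  shows det_level_gt: "m < det_level m"
    and det_level_determined:
      "g \<in> V (det_level m) \<Longrightarrow> \<exists>w. proj Psi m (det_level m - m) ` {g'. E (det_level m) g g'} = {w}"
  using someI_ex[OF out_edges_eventually_determined[of m]] unfolding det_level_def[symmetric]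
  by blast+

lemma out_edges_proj_eq:
  assumes "g \<in> V (det_level m)" "E (det_level m) g g1" "E (det_level m) g g2"
  shows "proj Psi m (det_level m - m) g1 = proj Psi m (det_level m - m) g2"
proof -
  obtain w where w: "proj Psi m (det_level m - m) ` {g'. E (det_level m) g g'} = {w}"
    using det_level_determined[OF assms(1)] by blast
  have "proj Psi m (det_level m - m) g1 \<in> {w}" "proj Psi m (det_level m - m) g2 \<in> {w}"
    using assms(2,3) w[symmetric] by auto
  then show ?thesis
    by simp
qed

lemma out_edges_proj_eq_above:
  assumes x: "x \<in> X" and K: "det_level m \<le> K"
    and e: "E K (x K) g" and e0: "E (det_level m) (x (det_level m)) g0"
  shows "proj Psi m (K - m) g = proj Psi m (det_level m - m) g0"
proof -
  let ?N = "det_level m"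
  have "E ?N (proj Psi ?N (K - ?N) (x K)) (proj Psi ?N (K - ?N) g)"
    using proj_edge[of ?N "K - ?N"] e K by simp
  then have e1: "E ?N (x ?N) (proj Psi ?N (K - ?N) g)"
    using proj_X[OF x K] by simp
  have "proj Psi m (K - m) g = proj Psi m (?N - m) (proj Psi ?N (K - ?N) g)"
    using proj_add[of Psi m "?N - m" "K - ?N" g] det_level_gt[of m] K by simp
  also have "\<dots> = proj Psi m (?N - m) g0"
    by (rule out_edges_proj_eq[OF X_in_V[OF x] e1 e0])
  finally show ?thesis .
qed

lemma successor_exists:
  assumes x: "x \<in> X"
  shows "\<exists>y. y \<in> X \<and> (\<forall>n. E n (x n) (y n))"
proof -
  let ?N = det_level
  define g where "g m = (SOME g. E (?N m) (x (?N m)) g)" for m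
  have g: "E (?N m) (x (?N m)) (g m)" for m
    unfolding g_def by (rule someI_ex) (rule out_edge[OF X_in_V[OF x]])
  define y where "y m = proj Psi m (?N m - m) (g m)" for m
  have y_eq: "proj Psi m (K - m) g' = y m" if "?N m \<le> K" "E K (x K) g'" for m K g'
    unfolding y_def by (rule out_edges_proj_eq_above[OF x that g])
  have "y m \<in> V m" for m
    using proj_V edge_in_V[OF g[of m]] det_level_gt[of m] by (simp add: y_def)
  moreover have "y m = Psi m (y (Suc m))" for m
  proof -
    define K where "K = max (?N m) (?N (Suc m))"
    obtain g' where e: "E K (x K) g'"
      using out_edge[OF X_in_V[OF x]] by blast
    have "K - m = Suc (K - Suc m)"
      using det_level_gt[of "Suc m"] by (simp add: K_def)
    have "y m = proj Psi m (K - m) g'"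
      using y_eq[of m K g'] e by (simp add: K_def)
    also have "\<dots> = Psi m (proj Psi (Suc m) (K - Suc m) g')"
      using \<open>K - m = Suc (K - Suc m)\<close> proj_Suc_outer by metis
    also have "\<dots> = Psi m (y (Suc m))"
      using y_eq[of "Suc m" K g'] e by (simp add: K_def)
    finally show ?thesis .
  qed
  moreover have "E m (x m) (y m)" for m
    using proj_edge[of m "?N m - m" "x (?N m)" "g m"] g[of m] det_level_gt[of m]
      proj_X[OF x, of m "?N m"]
    by (simp add: y_def)
  ultimately show ?thesis
    unfolding Xsp_def by blast
qed

lemma successor_unique:
  assumes "x \<in> X" "y \<in> X" "z \<in> X" "\<forall>n. E n (x n) (y n)" "\<forall>n. E n (x n) (z n)"
  shows "y = z"
proof
  fix m
  let ?N = "det_level m"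
  have "y m = proj Psi m (?N - m) (y ?N)" "z m = proj Psi m (?N - m) (z ?N)"
    using proj_X[OF assms(2)] proj_X[OF assms(3)] det_level_gt[of m] by simp_all
  moreover have "proj Psi m (?N - m) (y ?N) = proj Psi m (?N - m) (z ?N)"
    using out_edges_proj_eq[OF X_in_V[OF assms(1)]] assms(4,5) by blast
  ultimately show "y m = z m"
    by simp
qed

lemma H_in_X: "x \<in> X \<Longrightarrow> H x \<in> X"
  and H_edge: "x \<in> X \<Longrightarrow> E n (x n) (H x n)"
proof -
  assume x: "x \<in> X"
  obtain y where y: "y \<in> X" "\<forall>n. E n (x n) (y n)"
    using successor_exists[OF x] by blast
  have "H x = y"
    unfolding HX_def by (rule the_equality) (use y successor_unique[OF x] in blast)+
  then show "H x \<in> X" "E n (x n) (H x n)"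
    using y by auto
qed

lemma H_eqI: "x \<in> X \<Longrightarrow> y \<in> X \<Longrightarrow> \<forall>n. E n (x n) (y n) \<Longrightarrow> H x = y"
  using successor_unique H_in_X H_edge by blast

lemma H_local:
  assumes x: "x \<in> X" and y: "y \<in> X" and eq: "x (det_level m) = y (det_level m)"
  shows "H x m = H y m"
proof -
  let ?N = "det_level m"
  have "H x m = proj Psi m (?N - m) (H x ?N)" "H y m = proj Psi m (?N - m) (H y ?N)"
    using proj_X[OF H_in_X[OF x]] proj_X[OF H_in_X[OF y]] det_level_gt[of m] by simp_all
  moreover have "proj Psi m (?N - m) (H x ?N) = proj Psi m (?N - m) (H y ?N)"
    using out_edges_proj_eq[OF X_in_V[OF x]] H_edge[OF x] H_edge[OF y] eq by metis
  ultimately show ?thesis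
    by simp
qed

lemma H_surj: assumes y: "y \<in> X" shows "\<exists>x\<in>X. H x = y"
proof -
  define S where "S n = {u \<in> V n. E n u (y n)}" for n
  have "finite (S n)" for n
    using finite_V by (simp add: S_def)
  moreover have "S n \<noteq> {}" for n
    using in_edge[OF X_in_V[OF y]] edge_in_V unfolding S_def by blast
  moreover have "Psi n ` S (Suc n) \<subseteq> S n" for n
    using Psi_edge X_Psi[OF y] edge_in_V unfolding S_def by fastforce
  ultimately obtain x where x: "\<forall>n. x n \<in> S n \<and> x n = Psi n (x (Suc n))"
    using inverse_limit_nonempty by blast
  then have "x \<in> X"
    unfolding Xsp_def S_def by blast
  moreover have "H x = y"
    using x unfolding S_def by (intro H_eqI[OF \<open>x \<in> X\<close> y]) blast
  ultimately show ?thesis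
    by blast
qed

lemma phiU_lim:
  assumes x: "x \<in> X"
  shows "(\<lambda>n. phiU n (x n)) \<longlonglongrightarrow> pU x" and "pU x \<le> phiU n (x n)"
proof -
  have "decseq (\<lambda>n. phiU n (x n))"
    using phi_monotone[OF X_in_V[OF x]] X_Psi[OF x] by (intro decseq_SucI) simp
  moreover have "\<forall>n. 0 \<le> phiU n (x n)"
    using phi_bounds[OF X_in_V[OF x]] by (meson order_trans)
  ultimately obtain L where "(\<lambda>n. phiU n (x n)) \<longlonglongrightarrow> L" "\<forall>n. L \<le> phiU n (x n)"
    using decseq_convergent by blast
  moreover from this(1) have "pU x = L"
    unfolding phi_lim_def by (rule limI)
  ultimately show "(\<lambda>n. phiU n (x n)) \<longlonglongrightarrow> pU x" "pU x \<le> phiU n (x n)"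
    by auto
qed

lemma phiL_lim:
  assumes x: "x \<in> X"
  shows "(\<lambda>n. phiL n (x n)) \<longlonglongrightarrow> pL x" and "phiL n (x n) \<le> pL x"
proof -
  have "incseq (\<lambda>n. phiL n (x n))"
    using phi_monotone[OF X_in_V[OF x]] X_Psi[OF x] by (intro incseq_SucI) simp
  moreover have "\<forall>n. phiL n (x n) \<le> 1"
    using phi_bounds[OF X_in_V[OF x]] by (meson order_trans)
  ultimately obtain L where "(\<lambda>n. phiL n (x n)) \<longlonglongrightarrow> L" "\<forall>n. phiL n (x n) \<le> L"
    using incseq_convergent by blast
  moreover from this(1) have "pL x = L"
    unfolding phi_lim_def by (rule limI)
  ultimately show "(\<lambda>n. phiL n (x n)) \<longlonglongrightarrow> pL x" "phiL n (x n) \<le> pL x"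
    by auto
qed

lemma phi_lim_bounds:
  assumes x: "x \<in> X"
  shows "0 \<le> pL x" and "pL x \<le> pU x" and "pU x \<le> 1"
  using phi_bounds[OF X_in_V[OF x]]
  by (auto intro: LIMSEQ_le_const[OF phiL_lim(1)[OF x]] LIMSEQ_le[OF phiL_lim(1)[OF x] phiU_lim(1)[OF x]]
      LIMSEQ_le_const2[OF phiU_lim(1)[OF x]])

lemma mem_fence: "(x, t) \<in> Fn \<longleftrightarrow> x \<in> X \<and> pL x \<le> t \<and> t \<le> pU x"
  by (simp add: fence_def)

lemma fenceD: "p \<in> Fn \<Longrightarrow> fst p \<in> X \<and> 0 \<le> snd p \<and> snd p \<le> 1"
  using phi_lim_bounds by (cases p) (fastforce simp: mem_fence)

lemma graph_in_fence: "x \<in> X \<Longrightarrow> (x, pU x) \<in> Fn"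
  using phi_lim_bounds(2) by (simp add: mem_fence)

lemma fence_closed:
  assumes x: "x \<in> X" and close: "\<And>\<epsilon>. 0 < \<epsilon> \<Longrightarrow> \<exists>q\<in>Fn. dF (x, t) q < \<epsilon>"
  shows "(x, t) \<in> Fn"
proof -
  have "phiL n (x n) \<le> t + \<epsilon> \<and> t \<le> phiU n (x n) + \<epsilon>" if "0 < \<epsilon>" for n \<epsilon>
  proof -
    obtain y u where q: "(y, u) \<in> Fn" "dF (x, t) (y, u) < min ((1/2) ^ n) \<epsilon>"
      using close[of "min ((1/2) ^ n) \<epsilon>"] \<open>0 < \<epsilon>\<close> by auto
    then have y: "y \<in> X" "pL y \<le> u" "u \<le> pU y"
      by (auto simp: mem_fence)
    have "x n = y n"
      using q(2) dX_le_dF[of x y t u] by (intro eq_if_dX_less[of x y n]) auto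
    then have "phiL n (x n) \<le> u" "u \<le> phiU n (x n)"
      using phiL_lim(2)[OF y(1)] phiU_lim(2)[OF y(1)] y(2,3) by (metis order_trans)+
    moreover have "\<bar>t - u\<bar> < \<epsilon>"
      using q(2) dist_le_dF[of t u x y] by simp
    ultimately show ?thesis
      by linarith
  qed
  then have "phiL n (x n) \<le> t" "t \<le> phiU n (x n)" for n
    by (blast intro: field_le_epsilon)+
  then have "pL x \<le> t" "t \<le> pU x"
    by (auto intro: LIMSEQ_le_const2[OF phiL_lim(1)[OF x]] LIMSEQ_le_const[OF phiU_lim(1)[OF x]])
  then show ?thesis
    using x by (simp add: mem_fence)
qed

lemma X_convergent_subseq:
  fixes xs :: "nat \<Rightarrow> nat \<Rightarrow> 'v"
  assumes xs: "\<And>k. xs k \<in> X"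
  shows "\<exists>y r. y \<in> X \<and> strict_mono r \<and> (\<forall>j. dX (xs (r j)) y \<le> (1/2) ^ j)"
proof -
  define S where "S n = {v \<in> V n. infinite {k. xs k n = v}}" for n
  have "finite (S n)" for n
    using finite_V by (simp add: S_def)
  moreover have "S n \<noteq> {}" for n
  proof
    assume "S n = {}"
    then have "finite (\<Union>v\<in>V n. {k. xs k n = v})"
      using finite_V[of n] by (auto simp: S_def)
    moreover have "(\<Union>v\<in>V n. {k. xs k n = v}) = UNIV"
      using X_in_V[OF xs] by auto
    ultimately show False
      by simp
  qed
  moreover have "Psi n ` S (Suc n) \<subseteq> S n" for n
  proof
    fix w assume "w \<in> Psi n ` S (Suc n)"
    then obtain v where v: "v \<in> S (Suc n)" "w = Psi n v"
      by blast
    have "{k. xs k (Suc n) = v} \<subseteq> {k. xs k n = w}"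
      using X_Psi[OF xs] v(2) by auto
    then show "w \<in> S n"
      using v Psi_image[of n] infinite_super by (auto simp: S_def)
  qed
  ultimately obtain y where y: "\<forall>n. y n \<in> S n \<and> y n = Psi n (y (Suc n))"
    using inverse_limit_nonempty by blast
  have "y \<in> X"
    using y unfolding Xsp_def S_def by blast
  have "infinite {k. xs k n = y n}" for n
    using y unfolding S_def by blast
  then have "\<exists>k>k0. xs k n = y n" for n k0
    by (simp add: infinite_nat_iff_unbounded)
  then have "\<exists>r. \<forall>j. xs (r j) j = y j \<and> r j < r (Suc j)"
    by (intro dependent_nat_choice) auto
  then obtain r where r: "\<And>j. xs (r j) j = y j" "strict_mono r"
    by (auto simp: strict_mono_Suc_iff)
  have "dX (xs (r j)) y \<le> (1/2) ^ j" for j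
    using dX_le_if_agree_at[OF xs \<open>y \<in> X\<close> r(1)] by (rule order_trans) (simp add: power_decreasing)
  with \<open>y \<in> X\<close> r(2) show ?thesis
    by blast
qed

lemma fence_convergent_subseq:
  fixes \<sigma> :: "nat \<Rightarrow> (nat \<Rightarrow> 'v) \<times> real"
  assumes "range \<sigma> \<subseteq> Fn"
  shows "\<exists>l\<in>Fn. \<exists>r. strict_mono r \<and> (\<forall>\<epsilon>>0. \<forall>\<^sub>F j in sequentially. dF (\<sigma> (r j)) l < \<epsilon>)"
proof -
  have \<sigma>: "fst (\<sigma> k) \<in> X" "snd (\<sigma> k) \<in> {0..1}" for k
    using assms fenceD[of "\<sigma> k"] by auto
  obtain y r1 where y: "y \<in> X" and r1: "strict_mono r1" "\<forall>j. dX (fst (\<sigma> (r1 j))) y \<le> (1/2) ^ j"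
    using X_convergent_subseq[of "\<lambda>k. fst (\<sigma> k)"] \<sigma>(1) by blast
  have "seq_compact {0..1::real}"
    by (rule compact_imp_seq_compact[OF compact_Icc])
  moreover have "\<forall>j. snd (\<sigma> (r1 j)) \<in> {0..1}"
    using \<sigma>(2) by blast
  ultimately obtain \<tau> r2 where r2: "strict_mono r2" "((\<lambda>j. snd (\<sigma> (r1 j))) \<circ> r2) \<longlonglongrightarrow> \<tau>"
    by (metis seq_compactE)
  define r where "r = r1 \<circ> r2"
  have "(\<lambda>j. (1/2::real) ^ j) \<longlonglongrightarrow> 0"
    by (rule LIMSEQ_realpow_zero) simp_all
  have close: "\<forall>\<^sub>F j in sequentially. dF (\<sigma> (r j)) (y, \<tau>) < \<epsilon>" if "0 < \<epsilon>" for \<epsilon>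
    using order_tendstoD(2)[OF \<open>(\<lambda>j. (1/2::real) ^ j) \<longlonglongrightarrow> 0\<close> that] tendstoD[OF r2(2) that]
  proof eventually_elim
    case (elim j)
    have "dX (fst (\<sigma> (r j))) y \<le> (1/2) ^ r2 j"
      using r1(2) by (simp add: r_def)
    also have "\<dots> \<le> (1/2) ^ j"
      using seq_suble[OF r2(1)] by (rule power_decreasing) auto
    finally show ?case
      using elim by (simp add: dF_def r_def dist_real_def)
  qed
  have "(y, \<tau>) \<in> Fn"
  proof (rule fence_closed[OF y])
    fix \<epsilon> :: real assume "0 < \<epsilon>"
    then obtain j where "dF (\<sigma> (r j)) (y, \<tau>) < \<epsilon>"
      using close eventually_sequentially by (metis order_refl)
    then have "dF (y, \<tau>) (\<sigma> (r j)) < \<epsilon>"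
      by (metis Fence.commute)
    then show "\<exists>q\<in>Fn. dF (y, \<tau>) q < \<epsilon>"
      using assms by blast
  qed
  moreover have "strict_mono r"
    unfolding r_def using r1(1) r2(1) by (rule strict_mono_o)
  ultimately show ?thesis
    using close by blast
qed

lemma compact_fence: "compact_space Fence.mtopology"
  unfolding Fence.compact_space_sequentially
proof (intro allI impI)
  fix \<sigma> :: "nat \<Rightarrow> (nat \<Rightarrow> 'v) \<times> real"
  assume \<sigma>: "range \<sigma> \<subseteq> Fn"
  then obtain l r where l: "l \<in> Fn" and r: "strict_mono r"
    and close: "\<forall>\<epsilon>>0. \<forall>\<^sub>F j in sequentially. dF (\<sigma> (r j)) l < \<epsilon>"
    using fence_convergent_subseq by blast
  have "limitin Fence.mtopology (\<sigma> \<circ> r) l sequentially"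
    unfolding Fence.limitin_metric using l \<sigma> close by (fastforce elim: eventually_mono)
  with l r show "\<exists>l r. l \<in> Fn \<and> strict_mono r \<and> limitin Fence.mtopology (\<sigma> \<circ> r) l sequentially"
    by blast
qed

end

section \<open>Condition \<open>\<Gamma>\<close> and the ratio function \<open>s\<close>\<close>

locale gamma_system = cantor_system V E Psi phiL phiU
  for V :: "nat \<Rightarrow> 'v set" and E Psi phiL phiU +
  assumes phiU_pos: "\<forall>n. \<forall>v\<in>V n. phiU n v > 0"
    and condition_Gamma: "condition_Gamma E Psi phiU"
begin

abbreviation "G \<equiv> Gamma E Psi phiU"
abbreviation "s \<equiv> s_fun V E Psi phiU"

lemma finite_edges: "finite {(u, v). E n u v}"
proof (rule finite_subset)
  show "{(u, v). E n u v} \<subseteq> V n \<times> V n"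
    using edge_in_V by blast
qed (simp add: finite_V)

lemma Gamma_edge_le_Gamma: "E n u v \<Longrightarrow> Gamma_edge E Psi phiU n u v \<le> G n"
proof -
  assume "E n u v"
  have "{Gamma_edge E Psi phiU n u v | u v. E n u v}
      = (\<lambda>(u, v). Gamma_edge E Psi phiU n u v) ` {(u, v). E n u v}"
    by auto
  then have "finite {Gamma_edge E Psi phiU n u v | u v. E n u v}"
    using finite_edges by simp
  with \<open>E n u v\<close> show ?thesis
    unfolding Gamma_def by (intro Max_ge) auto
qed

lemma sn_diff_le_Gamma:
  assumes e: "E (Suc n) u v"
  shows "\<bar>sn phiU n (Psi n u) (Psi n v) - sn phiU (Suc n) u v\<bar> \<le> G n"
    and "\<bar>sn phiU n (Psi n v) (Psi n u) - sn phiU (Suc n) v u\<bar> \<le> G n"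
proof -
  let ?a = "Psi n u" and ?b = "Psi n v"
  let ?P = "{(u', v'). E (Suc n) u' v' \<and> Psi n u' = ?a \<and> Psi n v' = ?b}"
  let ?f = "\<lambda>(u', v'). {\<bar>sn phiU n ?b ?a - sn phiU (Suc n) v' u'\<bar>, \<bar>sn phiU n ?a ?b - sn phiU (Suc n) u' v'\<bar>}"
  have eq: "\<Union>{{\<bar>sn phiU n ?b ?a - sn phiU (Suc n) v' u'\<bar>, \<bar>sn phiU n ?a ?b - sn phiU (Suc n) u' v'\<bar>}
      | u' v'. E (Suc n) u' v' \<and> Psi n u' = ?a \<and> Psi n v' = ?b} = \<Union>(?f ` ?P)"
    by auto
  have "finite ?P"
    using finite_edges[of "Suc n"] by (rule rev_finite_subset) auto
  then have fin: "finite (insert 0 (\<Union>(?f ` ?P)))"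
    by auto
  have "(u, v) \<in> ?P"
    using e by simp
  then have "c \<le> Gamma_edge E Psi phiU n ?a ?b"
    if "c \<in> ?f (u, v)" for c
    unfolding Gamma_edge_def eq using that by (intro Max_ge[OF fin]) blast
  then show "\<bar>sn phiU n ?a ?b - sn phiU (Suc n) u v\<bar> \<le> G n"
    and "\<bar>sn phiU n ?b ?a - sn phiU (Suc n) v u\<bar> \<le> G n"
    using Gamma_edge_le_Gamma[OF Psi_edge[OF e]] by force+
qed

lemma summable_Gamma: "summable G" and suminf_Gamma_less_1: "suminf G < 1"
  using condition_Gamma unfolding condition_Gamma_def by auto

definition Gamma_tail :: "nat \<Rightarrow> real" where
  "Gamma_tail n = (\<Sum>k. G (k + n))"

lemma Gamma_tail_tendsto_zero: "Gamma_tail \<longlonglongrightarrow> 0"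
  unfolding Gamma_tail_def by (rule summable_tail_tendsto_zero[OF summable_Gamma])

definition ratio :: "nat \<Rightarrow> (nat \<Rightarrow> 'v) \<Rightarrow> real" where
  "ratio n x = sn phiU n (x n) (H x n)"

lemma ratio_steps:
  assumes x: "x \<in> X"
  shows "\<bar>ratio (Suc n) x - ratio n x\<bar> \<le> G n"
    and "\<bar>1 / ratio (Suc n) x - 1 / ratio n x\<bar> \<le> G n"
proof -
  have "Psi n (x (Suc n)) = x n" "Psi n (H x (Suc n)) = H x n"
    using X_Psi[OF x] X_Psi[OF H_in_X[OF x]] by simp_all
  then show "\<bar>ratio (Suc n) x - ratio n x\<bar> \<le> G n"
    and "\<bar>1 / ratio (Suc n) x - 1 / ratio n x\<bar> \<le> G n"
    using sn_diff_le_Gamma[OF H_edge[OF x, of "Suc n"]]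
    by (simp_all add: ratio_def sn_def abs_minus_commute)
qed

lemma ratio_tendsto:
  assumes x: "x \<in> X"
  shows "(\<lambda>n. ratio n x) \<longlonglongrightarrow> s x" and "\<bar>s x - ratio n x\<bar> \<le> Gamma_tail n"
proof -
  obtain L where L: "(\<lambda>n. ratio n x) \<longlonglongrightarrow> L" "\<And>n. \<bar>L - ratio n x\<bar> \<le> Gamma_tail n"
    using summable_increments_tendsto[OF summable_Gamma ratio_steps(1)[OF x]]
    unfolding Gamma_tail_def by blast
  moreover from L(1) have "s x = L"
    unfolding s_fun_def ratio_def[symmetric] by (rule limI)
  ultimately show "(\<lambda>n. ratio n x) \<longlonglongrightarrow> s x" "\<bar>s x - ratio n x\<bar> \<le> Gamma_tail n"
    by auto
qed

text \<open>At level 0 every ratio is at most \<open>1 / min \<phi>\<^sup>U\<^sub>0\<close>, and since \<open>\<Sum> \<Gamma>\<^sub>n < 1\<close> no later ratio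
  (or its inverse) drifts further than 1 from its level-0 value.\<close>

definition ratio_bound :: real where
  "ratio_bound = 1 / Min (insert 1 (phiU 0 ` V 0)) + 1"

lemma ratio_bound_pos: "0 < ratio_bound"
  and sn_0_le_ratio_bound: "u \<in> V 0 \<Longrightarrow> v \<in> V 0 \<Longrightarrow> sn phiU 0 u v + 1 \<le> ratio_bound"
proof -
  define c where "c = Min (insert 1 (phiU 0 ` V 0))"
  have c: "0 < c" "u \<in> V 0 \<Longrightarrow> c \<le> phiU 0 u" for u
    using finite_V[of 0] phiU_pos by (auto simp: c_def)
  then show "0 < ratio_bound"
    by (simp add: ratio_bound_def c_def[symmetric] add_pos_pos)
  assume "u \<in> V 0" "v \<in> V 0"
  then have "phiU 0 v / phiU 0 u \<le> 1 / c"
    using c phi_bounds[of v 0] by (intro frac_le) auto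
  then show "sn phiU 0 u v + 1 \<le> ratio_bound"
    by (simp add: ratio_bound_def sn_def c_def)
qed

lemma ratio_bounds:
  assumes x: "x \<in> X"
  shows "ratio n x \<le> ratio_bound" and "1 / ratio_bound \<le> ratio n x"
proof -
  have pos: "0 < ratio n x"
    using phiU_pos X_in_V[OF x] X_in_V[OF H_in_X[OF x]] by (simp add: ratio_def sn_def)
  have V0: "x 0 \<in> V 0" "H x 0 \<in> V 0"
    using X_in_V[OF x] X_in_V[OF H_in_X[OF x]] by auto
  have "\<bar>ratio n x - ratio 0 x\<bar> < 1" "\<bar>1 / ratio n x - 1 / ratio 0 x\<bar> < 1"
    using summable_increments_drift[OF summable_Gamma ratio_steps(1)[OF x]]
      summable_increments_drift[OF summable_Gamma ratio_steps(2)[OF x]] suminf_Gamma_less_1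
    by (auto intro: le_less_trans)
  moreover have "ratio 0 x + 1 \<le> ratio_bound" "1 / ratio 0 x + 1 \<le> ratio_bound"
    using sn_0_le_ratio_bound[OF V0] sn_0_le_ratio_bound[OF V0(2,1)]
    by (simp_all add: ratio_def sn_def)
  ultimately have "ratio n x \<le> ratio_bound" "1 / ratio n x \<le> ratio_bound"
    by linarith+
  then show "ratio n x \<le> ratio_bound" "1 / ratio_bound \<le> ratio n x"
    using pos by (auto simp: field_simps)
qed

lemma s_bounds:
  assumes x: "x \<in> X"
  shows "s x \<le> ratio_bound" and "1 / ratio_bound \<le> s x" and "0 < s x"
proof -
  show "s x \<le> ratio_bound"
    by (rule LIMSEQ_le_const2[OF ratio_tendsto(1)[OF x]]) (use ratio_bounds(1)[OF x] in auto)
  show lower: "1 / ratio_bound \<le> s x"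
    by (rule LIMSEQ_le_const[OF ratio_tendsto(1)[OF x]]) (use ratio_bounds(2)[OF x] in auto)
  show "0 < s x"
    using ratio_bound_pos by (intro less_le_trans[OF _ lower]) simp
qed

lemma phi_lim_phiU_H: assumes x: "x \<in> X" shows "pU (H x) = s x * pU x"
proof -
  have "phiU n (H x n) = ratio n x * phiU n (x n)" for n
  proof -
    have "0 < phiU n (x n)"
      using phiU_pos X_in_V[OF x, of n] by blast
    then show ?thesis
      by (simp add: ratio_def sn_def)
  qed
  then have "(\<lambda>n. phiU n (H x n)) \<longlonglongrightarrow> s x * pU x"
    using tendsto_mult[OF ratio_tendsto(1)[OF x] phiU_lim(1)[OF x]] by simp
  with phiU_lim(1)[OF H_in_X[OF x]] show ?thesis
    by (rule LIMSEQ_unique)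
qed

lemma H_dist_le:
  assumes "x \<in> X" "y \<in> X" "dX x y < (1/2) ^ det_level m"
  shows "dX (H x) (H y) \<le> (1/2) ^ Suc m"
  using assms by (intro dX_le_if_agree_at H_in_X H_local eq_if_dX_less[of x y]) auto

lemma s_dist_le:
  assumes x: "x \<in> X" and y: "y \<in> X" and d: "dX x y < (1/2) ^ det_level n"
  shows "\<bar>s x - s y\<bar> \<le> 2 * Gamma_tail n"
proof -
  have "x (det_level n) = y (det_level n)"
    using d by (rule eq_if_dX_less) simp
  then have "x n = y n" "H x n = H y n"
    using X_agree_below[OF x y] det_level_gt[of n] H_local[OF x y] by auto
  then have "ratio n x = ratio n y"
    by (simp add: ratio_def)
  then show ?thesis
    using ratio_tendsto(2)[OF x, of n] ratio_tendsto(2)[OF y, of n] by linarith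
qed

section \<open>The lift \<open>T\<close> of \<open>H\<^sub>X\<close> to the fence\<close>

definition T :: "(nat \<Rightarrow> 'v) \<times> real \<Rightarrow> (nat \<Rightarrow> 'v) \<times> real" where
  "T p = (H (fst p), s (fst p) * snd p)"

lemma T_graph: "x \<in> X \<Longrightarrow> T (x, pU x) = (H x, pU (H x))"
  by (simp add: T_def phi_lim_phiU_H)

lemma T_snd_diff:
  assumes p: "(x, t) \<in> Fn" and q: "(y, u) \<in> Fn"
  shows "\<bar>s x * t - s y * u\<bar> \<le> \<bar>s x - s y\<bar> + ratio_bound * \<bar>t - u\<bar>"
proof -
  have t: "0 \<le> t" "t \<le> 1" and y: "y \<in> X"
    using fenceD[OF p] fenceD[OF q] by auto
  have "\<bar>s x * t - s y * u\<bar> = \<bar>(s x - s y) * t + s y * (t - u)\<bar>"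
    by (simp add: algebra_simps)
  also have "\<dots> \<le> \<bar>s x - s y\<bar> * t + s y * \<bar>t - u\<bar>"
    using t s_bounds(3)[OF y] by (simp add: abs_mult abs_triangle_ineq[THEN order_trans])
  also have "\<dots> \<le> \<bar>s x - s y\<bar> + ratio_bound * \<bar>t - u\<bar>"
    using t s_bounds(1)[OF y] by (intro add_mono mult_left_le mult_right_mono) auto
  finally show ?thesis .
qed

lemma T_uniformly_continuous:
  assumes "0 < \<epsilon>"
  shows "\<exists>\<delta>>0. \<forall>p\<in>Fn. \<forall>q\<in>Fn. dF p q < \<delta> \<longrightarrow> dF (T p) (T q) < \<epsilon>"
proof -
  obtain m where m: "(1/2::real) ^ m < \<epsilon>"
    using real_arch_pow_inv[OF assms, of "1/2"] by auto
  obtain n where n: "Gamma_tail n < \<epsilon> / 4"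
    using order_tendstoD(2)[OF Gamma_tail_tendsto_zero, of "\<epsilon> / 4"] assms
    by (auto simp: eventually_sequentially)
  define \<delta> where "\<delta> = min ((1/2) ^ max (det_level m) (det_level n)) (\<epsilon> / (2 * ratio_bound))"
  have "dF (T (x, t)) (T (y, u)) < \<epsilon>"
    if p: "(x, t) \<in> Fn" and q: "(y, u) \<in> Fn" and d: "dF (x, t) (y, u) < \<delta>" for x t y u
  proof -
    have x: "x \<in> X" and y: "y \<in> X"
      using fenceD[OF p] fenceD[OF q] by auto
    have dxy: "dX x y < (1/2) ^ det_level k" if "k \<in> {m, n}" for k
    proof -
      have "(1/2::real) ^ max (det_level m) (det_level n) \<le> (1/2) ^ det_level k"
        by (rule power_decreasing) (use that in auto)
      then show ?thesis
        using d dX_le_dF[of x y t u] unfolding \<delta>_def min_less_iff_conj by linarith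
    qed
    have "dX (H x) (H y) \<le> (1/2) ^ Suc m"
      using H_dist_le[OF x y dxy[of m]] by simp
    also have "\<dots> \<le> (1/2) ^ m"
      by (rule power_decreasing) simp_all
    finally have "dX (H x) (H y) < \<epsilon>"
      using m by linarith
    moreover have "\<bar>s x - s y\<bar> < \<epsilon> / 2"
      using s_dist_le[OF x y dxy[of n]] n by simp
    moreover have "\<bar>t - u\<bar> < \<epsilon> / (2 * ratio_bound)"
      using d dist_le_dF[of t u x y] unfolding \<delta>_def min_less_iff_conj by linarith
    then have "ratio_bound * \<bar>t - u\<bar> < \<epsilon> / 2"
      using ratio_bound_pos by (simp add: field_simps)
    ultimately show ?thesis
      using T_snd_diff[OF p q] by (simp add: dF_def T_def)
  qed
  moreover have "0 < \<delta>"
    using assms ratio_bound_pos by (simp add: \<delta>_def)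
  ultimately show ?thesis
    by auto
qed

lemma T_lipschitz_bound:
  assumes s_lip: "\<forall>x\<in>X. \<forall>y\<in>X. rdist (s x) (s y) \<le> B1 * dX x y"
    and H_lip: "\<forall>x\<in>X. \<forall>y\<in>X. dX (H x) (H y) \<le> B2 * dX x y"
    and p: "(x, t) \<in> Fn" and q: "(y, u) \<in> Fn"
  shows "dF (T (x, t)) (T (y, u)) \<le> (\<bar>B1\<bar> + \<bar>B2\<bar> + ratio_bound) * dF (x, t) (y, u)"
proof -
  let ?D = "dF (x, t) (y, u)" and ?K = "\<bar>B1\<bar> + \<bar>B2\<bar> + ratio_bound"
  have x: "x \<in> X" and y: "y \<in> X"
    using fenceD[OF p] fenceD[OF q] by auto
  have dxy: "0 \<le> dX x y" "dX x y \<le> ?D" and dtu: "\<bar>t - u\<bar> \<le> ?D"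
    by (simp_all add: dX_nonneg dX_le_dF dist_le_dF)
  have "0 \<le> ?D"
    by (rule dF_nonneg)
  have "dX (H x) (H y) \<le> \<bar>B2\<bar> * ?D"
    using H_lip x y mult_le_abs_mult[OF dxy, of B2] by (meson order_trans)
  also have "\<dots> \<le> ?K * ?D"
    using \<open>0 \<le> ?D\<close> ratio_bound_pos by (intro mult_right_mono) auto
  finally have H_le: "dX (H x) (H y) \<le> ?K * ?D" .
  have "\<bar>s x - s y\<bar> \<le> \<bar>B1\<bar> * ?D"
    using s_lip x y mult_le_abs_mult[OF dxy, of B1] unfolding rdist_def by (meson order_trans)
  moreover have "ratio_bound * \<bar>t - u\<bar> \<le> ratio_bound * ?D"
    using dtu ratio_bound_pos by (intro mult_left_mono) auto
  ultimately have "\<bar>s x * t - s y * u\<bar> \<le> (\<bar>B1\<bar> + ratio_bound) * ?D"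
    using T_snd_diff[OF p q] unfolding distrib_right by linarith
  then have "\<bar>s x * t - s y * u\<bar> \<le> ?K * ?D"
    using \<open>0 \<le> ?D\<close> by (smt (verit) mult_right_mono abs_ge_zero)
  with H_le show ?thesis
    by (simp add: dF_def T_def)
qed

lemma T_lipschitz:
  assumes "lipschitz_map X dX rdist s" and "lipschitz_map X dX dX H"
  shows "lipschitz_map Fn dF dF T"
proof -
  obtain B1 B2 where s_lip: "\<forall>x\<in>X. \<forall>y\<in>X. rdist (s x) (s y) \<le> B1 * dX x y"
    and H_lip: "\<forall>x\<in>X. \<forall>y\<in>X. dX (H x) (H y) \<le> B2 * dX x y"
    using assms unfolding lipschitz_map_def by blast
  have "dF (T p) (T q) \<le> (\<bar>B1\<bar> + \<bar>B2\<bar> + ratio_bound) * dF p q" if "p \<in> Fn" "q \<in> Fn" for p q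
    using that T_lipschitz_bound[OF s_lip H_lip] by (cases p, cases q) simp
  then show ?thesis
    unfolding lipschitz_map_def by blast
qed

lemma T_lower_bound:
  assumes A: "0 < A" and H_lower: "\<forall>x\<in>X. \<forall>y\<in>X. A * dX x y \<le> dX (H x) (H y)"
    and inv_s_lip: "\<forall>x\<in>X. \<forall>y\<in>X. rdist (1 / s x) (1 / s y) \<le> C * dX x y"
    and p: "(x, t) \<in> Fn" and q: "(y, u) \<in> Fn"
  shows "dF (x, t) (y, u)
    \<le> (1 / A + ratio_bound + ratio_bound * \<bar>C\<bar> / A) * dF (T (x, t)) (T (y, u))"
proof -
  define D where "D = dF (T (x, t)) (T (y, u))"
  have x: "x \<in> X" and y: "y \<in> X" and u: "0 \<le> u" "u \<le> 1"
    using fenceD[OF p] fenceD[OF q] by auto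
  have sx: "0 < s x" "1 / s x \<le> ratio_bound" and sy: "0 < s y" "s y \<le> ratio_bound"
    using s_bounds[OF x] s_bounds[OF y] ratio_bound_pos by (auto simp: field_simps)
  have "0 \<le> D"
    by (simp add: D_def dF_nonneg)
  have "dX (H x) (H y) \<le> D"
    using dX_le_dF by (simp add: D_def T_def)
  moreover have "A * dX x y \<le> dX (H x) (H y)"
    using H_lower x y by blast
  ultimately have "A * dX x y \<le> D"
    by linarith
  then have dxy: "dX x y \<le> D / A"
    using A by (simp add: field_simps)
  have st: "\<bar>s x * t - s y * u\<bar> \<le> D"
    using dist_le_dF by (simp add: D_def T_def)
  have inv_s: "\<bar>1 / s x - 1 / s y\<bar> \<le> \<bar>C\<bar> * (D / A)"
    using inv_s_lip x y mult_le_abs_mult[OF dX_nonneg dxy, of C] unfolding rdist_def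
    by (meson order_trans)
  have "t - u = (s x * t - s y * u) * (1 / s x) + (s y * u) * (1 / s x - 1 / s y)"
    using sx sy by (simp add: field_simps)
  then have "\<bar>t - u\<bar> \<le> \<bar>s x * t - s y * u\<bar> * (1 / s x) + (s y * u) * \<bar>1 / s x - 1 / s y\<bar>"
    using sx sy u by (simp add: abs_mult abs_triangle_ineq[THEN order_trans])
  also have "\<dots> \<le> D * ratio_bound + ratio_bound * (\<bar>C\<bar> * (D / A))"
  proof (intro add_mono mult_mono)
    show "s y * u \<le> ratio_bound"
      using sy u by (metis mult_left_le order_trans less_imp_le)
  qed (use st sx sy u inv_s \<open>0 \<le> D\<close> ratio_bound_pos in auto)
  finally have tu: "\<bar>t - u\<bar> \<le> D * ratio_bound + ratio_bound * (\<bar>C\<bar> * (D / A))" .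
  have K: "(1 / A + ratio_bound + ratio_bound * \<bar>C\<bar> / A) * D
      = D / A + D * ratio_bound + ratio_bound * (\<bar>C\<bar> * (D / A))"
    by (simp add: algebra_simps)
  have "0 \<le> D / A" "0 \<le> D * ratio_bound" "0 \<le> ratio_bound * (\<bar>C\<bar> * (D / A))"
    using A \<open>0 \<le> D\<close> ratio_bound_pos by simp_all
  with dxy tu K have "dX x y \<le> (1 / A + ratio_bound + ratio_bound * \<bar>C\<bar> / A) * D"
    and "\<bar>t - u\<bar> \<le> (1 / A + ratio_bound + ratio_bound * \<bar>C\<bar> / A) * D"
    by linarith+
  then show ?thesis
    unfolding D_def[symmetric] dF_def[of "(x, t)"] by simp
qed

lemma T_bi_lipschitz:
  assumes "lipschitz_map X dX rdist s" and "lipschitz_map X dX rdist (\<lambda>x. 1 / s x)"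
    and "bi_lipschitz_map X dX dX H"
  shows "bi_lipschitz_map Fn dF dF T"
proof -
  obtain B1 where s_lip: "\<forall>x\<in>X. \<forall>y\<in>X. rdist (s x) (s y) \<le> B1 * dX x y"
    using assms(1) unfolding lipschitz_map_def by blast
  obtain C where inv_s_lip: "\<forall>x\<in>X. \<forall>y\<in>X. rdist (1 / s x) (1 / s y) \<le> C * dX x y"
    using assms(2) unfolding lipschitz_map_def by blast
  obtain A B2 where A: "0 < A"
    and H_bounds: "\<forall>x\<in>X. \<forall>y\<in>X. A * dX x y \<le> dX (H x) (H y) \<and> dX (H x) (H y) \<le> B2 * dX x y"
    using assms(3) unfolding bi_lipschitz_map_def by blast
  then have H_lower: "\<forall>x\<in>X. \<forall>y\<in>X. A * dX x y \<le> dX (H x) (H y)"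
    and H_lip: "\<forall>x\<in>X. \<forall>y\<in>X. dX (H x) (H y) \<le> B2 * dX x y"
    by simp_all
  define K where "K = 1 / A + ratio_bound + ratio_bound * \<bar>C\<bar> / A"
  have "0 < K"
    using A ratio_bound_pos by (simp add: K_def add_pos_nonneg)
  have "1 / K * dF p q \<le> dF (T p) (T q) \<and> dF (T p) (T q) \<le> (\<bar>B1\<bar> + \<bar>B2\<bar> + ratio_bound) * dF p q"
    if "p \<in> Fn" "q \<in> Fn" for p q
    using that T_lower_bound[OF A H_lower inv_s_lip] T_lipschitz_bound[OF s_lip H_lip] \<open>0 < K\<close>
    by (cases p, cases q) (auto simp: K_def field_simps)
  then show ?thesis
    unfolding bi_lipschitz_map_def using \<open>0 < K\<close> by (meson zero_less_divide_1_iff)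
qed

lemma T_isometric:
  assumes "\<forall>x\<in>X. s x = 1" and "isometric_map X dX dX H"
  shows "isometric_map Fn dF dF T"
  using assms fenceD unfolding isometric_map_def by (auto simp: dF_def T_def)

end

section \<open>Scissorhand fences\<close>

locale scissorhand_system = gamma_system V E Psi phiL phiU
  for V :: "nat \<Rightarrow> 'v set" and E Psi phiL phiU +
  assumes scissorhand: "scissorhand V Psi phiL phiU"
begin

lemma closure_of_graph: "Fence.mtopology closure_of ((\<lambda>x. (x, pU x)) ` X) = Fn"
  using scissorhand graph_in_fence
  unfolding Fence.metric_closure_of scissorhand_def by (fastforce simp: Fence.in_mball)

lemma T_in_fence: assumes p: "p \<in> Fn" shows "T p \<in> Fn"
proof -
  obtain x t where xt: "p = (x, t)"
    by fastforce
  have x: "x \<in> X"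
    using fenceD[OF p] xt by simp
  have "(H x, s x * t) \<in> Fn"
  proof (rule fence_closed[OF H_in_X[OF x]])
    fix \<epsilon> :: real assume "0 < \<epsilon>"
    then obtain \<delta> where "0 < \<delta>" and \<delta>: "\<forall>p\<in>Fn. \<forall>q\<in>Fn. dF p q < \<delta> \<longrightarrow> dF (T p) (T q) < \<epsilon>"
      using T_uniformly_continuous by blast
    then obtain x' where x': "x' \<in> X" "dF p (x', pU x') < \<delta>"
      using scissorhand p unfolding scissorhand_def by blast
    then have "dF (T p) (T (x', pU x')) < \<epsilon>"
      using \<delta> p graph_in_fence by blast
    moreover have "T (x', pU x') \<in> Fn"
      using T_graph[OF x'(1)] graph_in_fence[OF H_in_X[OF x'(1)]] by simp
    ultimately show "\<exists>q\<in>Fn. dF (H x, s x * t) q < \<epsilon>"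
      using xt by (auto simp: T_def)
  qed
  then show ?thesis
    using xt by (simp add: T_def)
qed

lemma T_continuous: "continuous_map Fence.mtopology Fence.mtopology T"
  unfolding Fence.metric_continuous_map[OF Metric_space_dF]
proof (intro conjI ballI allI impI)
  show "T ` Fn \<subseteq> Fn"
    using T_in_fence by blast
  fix p and \<epsilon> :: real
  assume "p \<in> Fn" "0 < \<epsilon>"
  then obtain \<delta> where "0 < \<delta>" "\<forall>p\<in>Fn. \<forall>q\<in>Fn. dF p q < \<delta> \<longrightarrow> dF (T p) (T q) < \<epsilon>"
    using T_uniformly_continuous by blast
  with \<open>p \<in> Fn\<close> show "\<exists>\<delta>>0. \<forall>q. q \<in> Fn \<and> dF p q < \<delta> \<longrightarrow> dF (T p) (T q) < \<epsilon>"
    by blast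
qed

lemma T_surj: "T ` Fn = Fn"
proof
  show "T ` Fn \<subseteq> Fn"
    using T_in_fence by blast
  have "compactin Fence.mtopology (T ` Fn)"
    using image_compactin[OF compact_fence[unfolded compact_space_def] T_continuous] by simp
  then have "closedin Fence.mtopology (T ` Fn)"
    by (rule compactin_imp_closedin[OF Fence.Hausdorff_space_mtopology])
  moreover have "(\<lambda>x. (x, pU x)) ` X \<subseteq> T ` Fn"
  proof
    fix p assume "p \<in> (\<lambda>x. (x, pU x)) ` X"
    then obtain y where "y \<in> X" "p = (y, pU y)"
      by blast
    moreover obtain x where "x \<in> X" "H x = y"
      using H_surj[OF \<open>y \<in> X\<close>] by blast
    ultimately show "p \<in> T ` Fn"
      using T_graph graph_in_fence by (metis image_eqI)
  qed
  ultimately show "Fn \<subseteq> T ` Fn"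
    using closure_of_minimal closure_of_graph by metis
qed

lemma T_unique:
  assumes cont: "continuous_map Fence.mtopology Fence.mtopology T'"
    and graph: "\<forall>x\<in>X. T' (x, pU x) = (H x, pU (H x))" and p: "p \<in> Fn"
  shows "T' p = T p"
proof (rule forall_in_closure_of_eq[OF _ Fence.Hausdorff_space_mtopology cont T_continuous])
  show "p \<in> Fence.mtopology closure_of ((\<lambda>x. (x, pU x)) ` X)"
    using p closure_of_graph by simp
  show "T' q = T q" if "q \<in> (\<lambda>x. (x, pU x)) ` X" for q
    using that graph T_graph by auto
qed

lemma T_homeomorphic:
  assumes "homeomorphic_map Cantor.mtopology Cantor.mtopology H"
  shows "homeomorphic_map Fence.mtopology Fence.mtopology T"
proof (rule continuous_imp_homeomorphic_map[OF T_continuous compact_fence Fence.Hausdorff_space_mtopology])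
  have "inj_on H X"
    using homeomorphic_imp_injective_map[OF assms] by simp
  show "inj_on T (topspace Fence.mtopology)"
  proof (rule inj_onI)
    fix p q
    assume p: "p \<in> topspace Fence.mtopology" and q: "q \<in> topspace Fence.mtopology"
      and eq: "T p = T q"
    have "fst p \<in> X" "fst q \<in> X"
      using fenceD p q by auto
    then have "fst p = fst q"
      using eq \<open>inj_on H X\<close> by (simp add: T_def inj_on_def)
    moreover have "s (fst p) \<noteq> 0"
      using s_bounds(3)[OF \<open>fst p \<in> X\<close>] by simp
    ultimately have "snd p = snd q"
      using eq by (simp add: T_def)
    with \<open>fst p = fst q\<close> show "p = q"
      by (simp add: prod_eq_iff)
  qed
qed (simp add: T_surj)

end

theorem theorem5p4:
  fixes V :: "nat \<Rightarrow> 'v set" and E :: "nat \<Rightarrow> 'v \<Rightarrow> 'v \<Rightarrow> bool"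
    and Psi :: "nat \<Rightarrow> 'v \<Rightarrow> 'v" and phiL phiU :: "nat \<Rightarrow> 'v \<Rightarrow> real"
  assumes "F_system V E Psi phiL phiU"
    and "\<forall>n. \<forall>v\<in>V n. phiU n v > 0"
    and "condition_Gamma E Psi phiU"
    and "scissorhand V Psi phiL phiU"
  shows "\<exists>T. (continuous_map (Metric_space.mtopology (fence V Psi phiL phiU) dF)
                             (Metric_space.mtopology (fence V Psi phiL phiU) dF) T \<and>
            T ` fence V Psi phiL phiU = fence V Psi phiL phiU \<and>
            (\<forall>p\<in>fence V Psi phiL phiU. fst (T p) = HX V E Psi (fst p)) \<and>
            (\<forall>x\<in>Xsp V Psi. T (x, phi_lim phiU x) =
                 (HX V E Psi x, phi_lim phiU (HX V E Psi x)))) \<and>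
         (\<forall>T'. (continuous_map (Metric_space.mtopology (fence V Psi phiL phiU) dF)
                               (Metric_space.mtopology (fence V Psi phiL phiU) dF) T' \<and>
                T' ` fence V Psi phiL phiU = fence V Psi phiL phiU \<and>
                (\<forall>p\<in>fence V Psi phiL phiU. fst (T' p) = HX V E Psi (fst p)) \<and>
                (\<forall>x\<in>Xsp V Psi. T' (x, phi_lim phiU x) =
                     (HX V E Psi x, phi_lim phiU (HX V E Psi x))))
              \<longrightarrow> (\<forall>p\<in>fence V Psi phiL phiU. T' p = T p)) \<and>
         (homeomorphic_map (Metric_space.mtopology (Xsp V Psi) dX)
                           (Metric_space.mtopology (Xsp V Psi) dX) (HX V E Psi)
            \<longrightarrow> homeomorphic_map (Metric_space.mtopology (fence V Psi phiL phiU) dF)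
                                 (Metric_space.mtopology (fence V Psi phiL phiU) dF) T) \<and>
         (lipschitz_map (Xsp V Psi) dX rdist (s_fun V E Psi phiU) \<and>
          lipschitz_map (Xsp V Psi) dX dX (HX V E Psi)
            \<longrightarrow> lipschitz_map (fence V Psi phiL phiU) dF dF T) \<and>
         (lipschitz_map (Xsp V Psi) dX rdist (s_fun V E Psi phiU) \<and>
          lipschitz_map (Xsp V Psi) dX rdist (\<lambda>x. 1 / s_fun V E Psi phiU x) \<and>
          bi_lipschitz_map (Xsp V Psi) dX dX (HX V E Psi)
            \<longrightarrow> bi_lipschitz_map (fence V Psi phiL phiU) dF dF T) \<and>
         ((\<forall>x\<in>Xsp V Psi. s_fun V E Psi phiU x = 1) \<and>
          isometric_map (Xsp V Psi) dX dX (HX V E Psi)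
            \<longrightarrow> isometric_map (fence V Psi phiL phiU) dF dF T)"
proof -
  interpret scissorhand_system V E Psi phiL phiU
    by unfold_locales (rule assms)+
  show ?thesis
  proof (intro exI[of _ T] conjI allI impI ballI)
    show "continuous_map Fence.mtopology Fence.mtopology T"
      by (rule T_continuous)
    show "T ` Fn = Fn"
      by (rule T_surj)
    show "fst (T p) = H (fst p)" for p
      by (simp add: T_def)
    show "T (x, pU x) = (H x, pU (H x))" if "x \<in> X" for x
      using that by (rule T_graph)
    show "T' p = T p" if "continuous_map Fence.mtopology Fence.mtopology T' \<and> T' ` Fn = Fn \<and>
        (\<forall>p\<in>Fn. fst (T' p) = H (fst p)) \<and> (\<forall>x\<in>X. T' (x, pU x) = (H x, pU (H x)))"
      and "p \<in> Fn" for T' p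
      using that by (intro T_unique) auto
  qed (auto intro: T_homeomorphic T_lipschitz T_bi_lipschitz T_isometric)
qed

end
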